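(* Let $r,\tilde r:\mathcal S\times\mathcal A\times\mathcal B\to[0,1]$, let $\pi$ be a leader policy with $\pi(\cdot\mid s,b)\in\Delta(\mathcal A)$, and set $r^\pi(s,b)=\sum_a\pi(a\mid s,b)r(s,a,b)$, $\tilde r^\pi(s,b)=\sum_a\pi(a\mid s,b)\tilde r(s,a,b)$, $\nu(b\mid s)\propto\exp(\eta r^\pi(s,b))$ and $\tilde\nu(b\mid s)\propto\exp(\eta\tilde r^\pi(s,b))$. Then for every $s\in\mathcal S$, $$D_{\rm TV}\bigl(\nu(\cdot\mid s),\tilde\nu(\cdot\mid s)\bigr)\le\eta\,\mathbb E_s\Bigl[\bigl|(\tilde r^\pi-r^\pi)(s,b)-\mathbb E_s[(\tilde r^\pi-r^\pi)(s,b)]\bigr|\Bigr]+C^{(3)}\,\mathbb E_s\Bigl[\bigl((\tilde r^\pi-r^\pi)(s,b)-\mathbb E_s[(\tilde r^\pi-r^\pi)(s,b)]\bigr)^2\Bigr],$$ where $\mathbb E_s$ is the expectation over $b\sim\nu(\cdot\mid s)$, $C^{(3)}=\frac{\eta^2e^{2\eta B_A}}{2}\bigl(2+\eta B_Ae^{2\eta B_A}\bigr)$ and $B_A=2+2\eta^{-1}\log|\mathcal B|$.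
   Context: $\mathcal S$ state space, $\mathcal A,\mathcal B$ action sets ($\mathcal B$ finite), $\eta>0$. $D_{\rm TV}(p,q)=\frac12\|p-q\|_1$. *)

theory Defs
  imports "HOL-Probability.Probability"
begin

definition avg_reward :: "('s \<Rightarrow> 'b \<Rightarrow> 'a pmf) \<Rightarrow> ('s \<Rightarrow> 'a \<Rightarrow> 'b \<Rightarrow> real) \<Rightarrow> 's \<Rightarrow> 'b \<Rightarrow> real" where
  "avg_reward \<pi> r s b = measure_pmf.expectation (\<pi> s b) (\<lambda>a. r s a b)"

definition softmax_resp :: "real \<Rightarrow> ('s \<Rightarrow> 'b::finite \<Rightarrow> real) \<Rightarrow> 's \<Rightarrow> 'b \<Rightarrow> real" where
  "softmax_resp \<eta> f s b = exp (\<eta> * f s b) / (\<Sum>b'\<in>UNIV. exp (\<eta> * f s b'))"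

definition tv_dist :: "('b::finite \<Rightarrow> real) \<Rightarrow> ('b \<Rightarrow> real) \<Rightarrow> real" where
  "tv_dist p q = (1/2) * (\<Sum>b\<in>UNIV. \<bar>p b - q b\<bar>)"

definition fexp :: "('b::finite \<Rightarrow> real) \<Rightarrow> ('b \<Rightarrow> real) \<Rightarrow> real" where
  "fexp p g = (\<Sum>b\<in>UNIV. p b * g b)"

end

theory Submission
  imports Defs
begin

text \<open>Both responses are softmax distributions, so \<open>\<nu>t\<close> is the exponential tilt
  \<open>\<nu>t b = \<nu> b * exp (x b) / E\<^sub>\<nu>[exp x]\<close> of \<open>\<nu>\<close> by the centred reward gap
  \<open>x = \<eta> (d - E\<^sub>\<nu> d)\<close>. Writing \<open>exp x = 1 + x + h\<close> with \<open>0 \<le> h \<le> x\<^sup>2 exp \<bar>x\<bar>\<close>,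
  the centring gives \<open>E\<^sub>\<nu>[exp x] = 1 + E\<^sub>\<nu> h\<close>, and hence
  \<open>D\<^sub>T\<^sub>V(\<nu>, \<nu>t) \<le> E\<^sub>\<nu>\<bar>x\<bar> / 2 + E\<^sub>\<nu> h\<close>. Rewards lie in \<open>[0, 1]\<close>, so \<open>\<bar>x\<bar> \<le> 2 \<eta>\<close>
  and \<open>E\<^sub>\<nu> h \<le> \<eta>\<^sup>2 exp (2 \<eta>) E\<^sub>\<nu>(d - E\<^sub>\<nu> d)\<^sup>2\<close>; the constant \<open>\<eta>\<^sup>2 exp (2 \<eta>)\<close> is
  smaller than \<open>C3\<close> because \<open>BA \<ge> 1\<close>.\<close>

definition prob_weights :: "('b::finite \<Rightarrow> real) \<Rightarrow> bool" where
  "prob_weights p \<longleftrightarrow> (\<forall>b. 0 \<le> p b) \<and> (\<Sum>b\<in>UNIV. p b) = 1"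

lemma fexp_add: "fexp p (\<lambda>b. f b + g b) = fexp p f + fexp p g"
  by (simp add: fexp_def distrib_left sum.distrib)

lemma fexp_diff: "fexp p (\<lambda>b. f b - g b) = fexp p f - fexp p g"
  by (simp add: fexp_def right_diff_distrib sum_subtractf)

lemma fexp_cmult: "fexp p (\<lambda>b. c * f b) = c * fexp p f"
  by (simp add: fexp_def sum_distrib_left mult.left_commute)

lemma fexp_const: "prob_weights p \<Longrightarrow> fexp p (\<lambda>_. c) = c"
  unfolding fexp_def prob_weights_def by (metis mult_1 sum_distrib_right)

lemma fexp_mono:
  assumes "prob_weights p" and "\<And>b. f b \<le> g b"
  shows "fexp p f \<le> fexp p g"
  using assms unfolding fexp_def prob_weights_def by (intro sum_mono mult_left_mono) auto

lemma fexp_nonneg: "prob_weights p \<Longrightarrow> (\<And>b. 0 \<le> f b) \<Longrightarrow> 0 \<le> fexp p f"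
  using fexp_mono[of p "\<lambda>_. 0" f] fexp_const[of p 0] by simp

lemma prob_weights_softmax_resp: "prob_weights (softmax_resp \<eta> f s)"
proof -
  have "(\<Sum>b\<in>UNIV. exp (\<eta> * f s b)) > 0"
    by (intro sum_pos) auto
  then show ?thesis
    by (simp add: prob_weights_def softmax_resp_def sum_divide_distrib[symmetric])
qed

lemma avg_reward_bounds:
  assumes "\<And>a. 0 \<le> r s a b \<and> r s a b \<le> 1"
  shows "0 \<le> avg_reward \<pi> r s b \<and> avg_reward \<pi> r s b \<le> 1"
proof -
  have "integrable (measure_pmf (\<pi> s b)) (\<lambda>a. r s a b)"
    by (rule measure_pmf.integrable_const_bound[where B = 1]) (use assms in auto)
  then show ?thesis
    using assms unfolding avg_reward_def
    by (auto intro!: integral_nonneg_AE measure_pmf.integral_le_const)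
qed

lemma exp_minus_one_minus_self_bounds:
  fixes x :: real
  shows "0 \<le> exp x - 1 - x \<and> exp x - 1 - x \<le> x\<^sup>2 * exp \<bar>x\<bar>"
proof -
  have lower: "1 + x \<le> exp x"
    by (rule exp_ge_add_one_self)
  have "exp x * (1 - x) \<le> exp x * exp (- x)"
    using exp_ge_add_one_self[of "- x"] by (intro mult_left_mono) auto
  then have upper: "exp x - 1 \<le> x * exp x"
    by (simp add: exp_minus algebra_simps)
  have "exp x - 1 - x \<le> x\<^sup>2 * exp \<bar>x\<bar>"
  proof (cases "x \<ge> 0")
    case True
    have "exp x - 1 - x \<le> x * (exp x - 1)"
      using upper by (simp add: algebra_simps)
    also have "\<dots> \<le> x * (x * exp x)"
      using upper True by (intro mult_left_mono) auto
    finally show ?thesis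
      using True by (simp add: power2_eq_square)
  next
    case False
    have "exp x - 1 - x \<le> (- x) * (1 - exp x)"
      using upper by (simp add: algebra_simps)
    also have "\<dots> \<le> (- x) * (- x)"
      using lower False by (intro mult_left_mono) linarith+
    also have "\<dots> \<le> x\<^sup>2 * exp \<bar>x\<bar>"
      using mult_left_mono[of 1 "exp \<bar>x\<bar>" "x\<^sup>2"] by (simp add: power2_eq_square)
    finally show ?thesis .
  qed
  with lower show ?thesis
    by linarith
qed

lemma softmax_resp_eq_tilt:
  fixes F G :: "'s \<Rightarrow> 'b::finite \<Rightarrow> real" and \<eta> c :: real and s :: 's
  defines "\<nu> \<equiv> softmax_resp \<eta> F s"
    and "x \<equiv> \<lambda>b. \<eta> * (G s b - F s b) - c"
  shows "softmax_resp \<eta> G s = (\<lambda>b. \<nu> b * exp (x b) / fexp \<nu> (\<lambda>b. exp (x b)))"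
proof
  fix b
  define SF where "SF = (\<Sum>b\<in>UNIV. exp (\<eta> * F s b))"
  define SG where "SG = (\<Sum>b\<in>UNIV. exp (\<eta> * G s b))"
  have SF_pos: "SF > 0"
    unfolding SF_def by (intro sum_pos) auto
  have tilt: "\<nu> b * exp (x b) = exp (\<eta> * G s b) * exp (- c) / SF" for b
    unfolding \<nu>_def x_def softmax_resp_def SF_def right_diff_distrib exp_diff exp_minus
    by (simp add: field_simps)
  have "fexp \<nu> (\<lambda>b. exp (x b)) = SG * exp (- c) / SF"
    unfolding fexp_def tilt SG_def by (simp add: sum_divide_distrib sum_distrib_right)
  then show "softmax_resp \<eta> G s b = \<nu> b * exp (x b) / fexp \<nu> (\<lambda>b. exp (x b))"
    using SF_pos by (simp add: tilt softmax_resp_def SG_def)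
qed

lemma tv_dist_exp_tilt_le:
  assumes p: "prob_weights p" and centred: "fexp p x = 0"
  defines "Z \<equiv> fexp p (\<lambda>b. exp (x b))"
  shows "tv_dist p (\<lambda>b. p b * exp (x b) / Z)
           \<le> fexp p (\<lambda>b. \<bar>x b\<bar>) / 2 + fexp p (\<lambda>b. exp (x b) - 1 - x b)"
proof -
  define h where "h b = exp (x b) - 1 - x b" for b
  have h_nonneg: "0 \<le> h b" for b
    unfolding h_def using exp_minus_one_minus_self_bounds[of "x b"] by simp
  have Z_eq: "Z = 1 + fexp p h"
    unfolding Z_def h_def using p centred by (simp add: fexp_diff fexp_const)
  have Z_ge: "Z \<ge> 1"
    using Z_eq fexp_nonneg[OF p h_nonneg] by simp
  have pointwise: "\<bar>p b - p b * exp (x b) / Z\<bar> \<le> p b * ((Z - 1) + \<bar>x b\<bar> + h b)" for b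
  proof -
    have p_b: "0 \<le> p b"
      using p by (simp add: prob_weights_def)
    have "p b - p b * exp (x b) / Z = p b * (Z - exp (x b)) / Z"
      using Z_ge by (simp add: field_simps)
    then have "\<bar>p b - p b * exp (x b) / Z\<bar> = p b * \<bar>Z - exp (x b)\<bar> / Z"
      using Z_ge p_b by (simp add: abs_mult)
    also have "\<dots> \<le> p b * \<bar>Z - exp (x b)\<bar>"
      using frac_le[of "p b * \<bar>Z - exp (x b)\<bar>" _ 1 Z] Z_ge p_b by simp
    also have "\<dots> \<le> p b * ((Z - 1) + \<bar>x b\<bar> + h b)"
      using Z_ge p_b h_nonneg[of b] unfolding h_def by (intro mult_left_mono) auto
    finally show ?thesis .
  qed
  have "tv_dist p (\<lambda>b. p b * exp (x b) / Z) \<le> fexp p (\<lambda>b. (Z - 1) + \<bar>x b\<bar> + h b) / 2"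
    unfolding tv_dist_def fexp_def using pointwise by (simp add: sum_mono)
  also have "\<dots> = fexp p (\<lambda>b. \<bar>x b\<bar>) / 2 + fexp p h"
    using p Z_eq by (simp add: fexp_add fexp_const)
  finally show ?thesis
    unfolding h_def .
qed

lemma tv_dist_softmax_resp_le:
  fixes F G :: "'s \<Rightarrow> 'b::finite \<Rightarrow> real" and \<eta> :: real and s :: 's
  assumes eta: "\<eta> > 0" and gap: "\<And>b. \<bar>G s b - F s b\<bar> \<le> 1"
  defines "\<nu> \<equiv> softmax_resp \<eta> F s"
    and "d \<equiv> \<lambda>b. G s b - F s b"
  defines "m \<equiv> fexp \<nu> d"
  shows "tv_dist \<nu> (softmax_resp \<eta> G s)
           \<le> \<eta> * fexp \<nu> (\<lambda>b. \<bar>d b - m\<bar>) + \<eta>\<^sup>2 * exp (2 * \<eta>) * fexp \<nu> (\<lambda>b. (d b - m)\<^sup>2)"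
proof -
  define x where "x b = \<eta> * (d b - m)" for b
  have \<nu>: "prob_weights \<nu>"
    unfolding \<nu>_def by (rule prob_weights_softmax_resp)
  have d_bounds: "- 1 \<le> d b \<and> d b \<le> 1" for b
    using gap[of b] unfolding d_def by linarith
  then have "fexp \<nu> (\<lambda>_. -1) \<le> m" "m \<le> fexp \<nu> (\<lambda>_. 1)"
    unfolding m_def by (auto intro!: fexp_mono[OF \<nu>])
  then have "\<bar>m\<bar> \<le> 1"
    by (simp add: fexp_const[OF \<nu>])
  then have "\<bar>x b\<bar> \<le> 2 * \<eta>" for b
    using gap[of b] eta unfolding x_def d_def by (simp add: abs_mult)
  then have remainder: "exp (x b) - 1 - x b \<le> \<eta>\<^sup>2 * exp (2 * \<eta>) * (d b - m)\<^sup>2" for b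
    using exp_minus_one_minus_self_bounds[of "x b"]
      mult_left_mono[of "exp \<bar>x b\<bar>" "exp (2 * \<eta>)" "(x b)\<^sup>2"]
    unfolding x_def by (simp add: power_mult_distrib mult_ac)
  have remainder_mean: "fexp \<nu> (\<lambda>b. exp (x b) - 1 - x b) \<le> fexp \<nu> (\<lambda>b. \<eta>\<^sup>2 * exp (2 * \<eta>) * (d b - m)\<^sup>2)"
    by (rule fexp_mono[OF \<nu> remainder])
  have centred: "fexp \<nu> x = 0"
    using \<nu> unfolding x_def m_def by (simp add: fexp_cmult fexp_diff fexp_const)
  have "softmax_resp \<eta> G s = (\<lambda>b. \<nu> b * exp (x b) / fexp \<nu> (\<lambda>b. exp (x b)))"
    unfolding \<nu>_def x_def d_def using softmax_resp_eq_tilt[of \<eta> G s F "\<eta> * m"]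
    by (simp add: right_diff_distrib)
  then have "tv_dist \<nu> (softmax_resp \<eta> G s)
               \<le> fexp \<nu> (\<lambda>b. \<bar>x b\<bar>) / 2 + fexp \<nu> (\<lambda>b. exp (x b) - 1 - x b)"
    using tv_dist_exp_tilt_le[OF \<nu> centred] by simp
  also have "\<dots> \<le> fexp \<nu> (\<lambda>b. \<bar>x b\<bar>) + fexp \<nu> (\<lambda>b. \<eta>\<^sup>2 * exp (2 * \<eta>) * (d b - m)\<^sup>2)"
    using fexp_nonneg[OF \<nu>, of "\<lambda>b. \<bar>x b\<bar>"] remainder_mean by simp
  also have "\<dots> = \<eta> * fexp \<nu> (\<lambda>b. \<bar>d b - m\<bar>) + \<eta>\<^sup>2 * exp (2 * \<eta>) * fexp \<nu> (\<lambda>b. (d b - m)\<^sup>2)"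
    using eta unfolding x_def by (simp add: abs_mult fexp_cmult)
  finally show ?thesis .
qed

lemma square_exp_le_C3:
  fixes \<eta> BA :: real
  assumes "\<eta> > 0" and "BA \<ge> 1"
  shows "\<eta>\<^sup>2 * exp (2 * \<eta>) \<le> \<eta>\<^sup>2 * exp (2 * \<eta> * BA) / 2 * (2 + \<eta> * BA * exp (2 * \<eta> * BA))"
proof -
  have "exp (2 * \<eta>) \<le> exp (2 * \<eta> * BA) / 2 * 2"
    using assms by (simp add: mult_le_cancel_left1 mult.assoc)
  also have "\<dots> \<le> exp (2 * \<eta> * BA) / 2 * (2 + \<eta> * BA * exp (2 * \<eta> * BA))"
    using assms by (intro mult_left_mono) auto
  finally show ?thesis
    by (simp add: mult_left_mono mult.assoc)
qed

theorem mainTheorem5: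
  fixes r rt :: "'s \<Rightarrow> 'a \<Rightarrow> 'b::finite \<Rightarrow> real"
    and \<pi> :: "'s \<Rightarrow> 'b \<Rightarrow> 'a pmf"
    and \<eta> :: real and s :: 's
  assumes eta_pos: "\<eta> > 0"
    and r_range: "\<And>s a b. 0 \<le> r s a b \<and> r s a b \<le> 1"
    and rt_range: "\<And>s a b. 0 \<le> rt s a b \<and> rt s a b \<le> 1"
  shows
    "let \<nu> = softmax_resp \<eta> (avg_reward \<pi> r) s;
         \<nu>t = softmax_resp \<eta> (avg_reward \<pi> rt) s;
         d = (\<lambda>b. avg_reward \<pi> rt s b - avg_reward \<pi> r s b);
         m = fexp \<nu> d;
         BA = 2 + 2 / \<eta> * ln (real CARD('b));
         C3 = \<eta>^2 * exp (2 * \<eta> * BA) / 2 * (2 + \<eta> * BA * exp (2 * \<eta> * BA))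
     in tv_dist \<nu> \<nu>t \<le> \<eta> * fexp \<nu> (\<lambda>b. \<bar>d b - m\<bar>) + C3 * fexp \<nu> (\<lambda>b. (d b - m)^2)"
proof -
  define \<nu> where "\<nu> = softmax_resp \<eta> (avg_reward \<pi> r) s"
  define d where "d b = avg_reward \<pi> rt s b - avg_reward \<pi> r s b" for b
  define m where "m = fexp \<nu> d"
  define BA where "BA = 2 + 2 / \<eta> * ln (real CARD('b))"
  define C3 where "C3 = \<eta>^2 * exp (2 * \<eta> * BA) / 2 * (2 + \<eta> * BA * exp (2 * \<eta> * BA))"
  have "\<bar>avg_reward \<pi> rt s b - avg_reward \<pi> r s b\<bar> \<le> 1" for b
    using avg_reward_bounds[of r s b \<pi>] avg_reward_bounds[of rt s b \<pi>] r_range rt_range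
    by (simp add: abs_le_iff)
  from tv_dist_softmax_resp_le[where F = "avg_reward \<pi> r" and G = "avg_reward \<pi> rt", OF eta_pos this]
  have tv: "tv_dist \<nu> (softmax_resp \<eta> (avg_reward \<pi> rt) s)
      \<le> \<eta> * fexp \<nu> (\<lambda>b. \<bar>d b - m\<bar>) + \<eta>\<^sup>2 * exp (2 * \<eta>) * fexp \<nu> (\<lambda>b. (d b - m)\<^sup>2)"
    unfolding \<nu>_def m_def d_def[abs_def] .
  have "real CARD('b) \<ge> 1"
    by (simp add: Suc_le_eq)
  then have C3_ge: "\<eta>\<^sup>2 * exp (2 * \<eta>) \<le> C3"
    using eta_pos unfolding C3_def BA_def by (intro square_exp_le_C3) (simp_all add: ln_ge_zero)
  have variance_nonneg: "0 \<le> fexp \<nu> (\<lambda>b. (d b - m)\<^sup>2)"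
    unfolding \<nu>_def by (intro fexp_nonneg prob_weights_softmax_resp) simp
  have "tv_dist \<nu> (softmax_resp \<eta> (avg_reward \<pi> rt) s)
      \<le> \<eta> * fexp \<nu> (\<lambda>b. \<bar>d b - m\<bar>) + C3 * fexp \<nu> (\<lambda>b. (d b - m)\<^sup>2)"
    using tv add_left_mono[OF mult_right_mono[OF C3_ge variance_nonneg]] by (rule order_trans)
  then show ?thesis
    unfolding Let_def \<nu>_def[symmetric] d_def[symmetric] m_def[symmetric] BA_def[symmetric]
      C3_def[symmetric] .
qed

end
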